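(* Let $\Sigma$ be a finite alphabet with $|\Sigma|\ge 2$, let $m,n$ be positive integers with $m\ge 2$, and let $\rho,\rho_1,\rho_2,\rho_3$ be real numbers with $0<\rho<1$, $\rho_1>0$, $\rho_2>0$, $\rho_3>0$ and $\rho_1+\rho_2+\rho_3\le 1$. Then the Markov chains with transition matrices $S^{\mathfrak{N}(n)}_{\rho_1,\rho_2,\rho_3}$, $S^{\mathfrak{N}_m(n)}_{\rho_1,\rho_2,\rho_3}$ and $S^{\mathfrak{N}'_m(n)}_{\rho_1,\rho_2,\rho_3}$ are irreducible, and so are the Markov chains with transition matrices $S^{\mathfrak{N}(n)^\bullet}_{\rho}$, $S^{\mathfrak{N}_m(n)^\bullet}_{\rho}$ and $S^{\mathfrak{N}'_m(n)^\bullet}_{\rho}$.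
   Context: A non-deterministic automaton (NFA) over $\Sigma$ is a tuple $(Q,\Sigma,\Delta,I,F)$ with $Q$ a finite set of states, $\Delta\subseteq Q\times\Sigma\times Q$ the transitions, $I\subseteq Q$ the initial states and $F\subseteq Q$ the final states. A path is a sequence of transitions $(p_0,a_0,q_0)\cdots(p_k,a_k,q_k)$ with $q_i=p_{i+1}$. The NFA is accessible if every state is reachable by a path from an initial state, co-accessible if from every state a final state is reachable by a path, and trim if both. $\mathfrak{N}(n)$ is the set of trim NFAs over $\Sigma$ with state set $Q=\{1,\dots,n\}$. $\mathfrak{N}_m(n)$ is the set of automata in $\mathfrak{N}(n)$ such that for each state $p$ there are at most $m$ pairs $(a,q)$ with $(p,a,q)\in\Delta$. $\mathfrak{N}'_m(n)$ is the set of automata in $\mathfrak{N}(n)$ such that for each state $p$ and each letter $a$ there are at most $m$ states $q$ with $(p,a,q)\in\Delta$. For a class $\mathfrak{X}$, $\mathfrak{X}^\bullet$ is the subclass of automata whose set of initial states is exactly $\{1\}$. For an automaton $\mathcal{A}=(Q,\Sigma,\Delta,I,F)$: $\mathsf{Ch_{init}}(\mathcal{A},q)$ is $\mathcal{A}$ with $q$ removed from $I$ if $q\in I$ and added to $I$ otherwise; $\mathsf{Ch_{final}}(\mathcal{A},q)$ is defined similarly with $F$; $\mathsf{Ch_{trans}}(\mathcal{A},(p,a,q))$ is $\mathcal{A}$ with $(p,a,q)$ removed from $\Delta$ if present and added otherwise. For a class $\mathfrak{X}$ of automata with state set $Q=\{1,\dots,n\}$ and reals $\rho_i\in[0,1]$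 with $\rho_1+\rho_2+\rho_3\le1$, the matrix $S^{\mathfrak{X}}_{\rho_1,\rho_2,\rho_3}$ on $\mathfrak{X}\times\mathfrak{X}$ is: for $x\ne y$, $S(x,y)=\rho_1/n$ if $y=\mathsf{Ch_{init}}(x,q)$ for some $q$; $S(x,y)=\rho_2/n$ if $y=\mathsf{Ch_{final}}(x,q)$ for some $q$; $S(x,y)=\rho_3/(|\Sigma|n^2)$ if $y=\mathsf{Ch_{trans}}(x,(p,a,q))$ for some $(p,a,q)\in Q\times\Sigma\times Q$; $S(x,y)=0$ otherwise; and $S(x,x)=1-\sum_{y\ne x}S(x,y)$. For $\mathfrak{X}\in\{\mathfrak{N}(n),\mathfrak{N}_m(n),\mathfrak{N}'_m(n)\}$ and $0<\rho<1$, $S^{\mathfrak{X}^\bullet}_\rho$ is the matrix $S^{\mathfrak{X}^\bullet}_{0,\rho,1-\rho}$ defined by the same rules on the class $\mathfrak{X}^\bullet$. A Markov chain is irreducible if the directed graph on its state space with an edge $x\to y$ whenever the transition probability from $x$ to $y$ is nonzero is strongly connected. *)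

theory Defs
  imports Complex_Main
begin

text \<open>NFAs over the alphabet given by the finite type 'a; states are natural numbers,
  the state set being {1..n}.\<close>

record 'a nfa =
  trans :: "(nat \<times> 'a \<times> nat) set"
  init  :: "nat set"
  final :: "nat set"

definition edge_rel :: "'a nfa \<Rightarrow> (nat \<times> nat) set" where
  "edge_rel A = {(p, q). \<exists>a. (p, a, q) \<in> trans A}"

definition accessible :: "nat \<Rightarrow> 'a nfa \<Rightarrow> bool" where
  "accessible n A \<longleftrightarrow> (\<forall>q\<in>{1..n}. \<exists>i\<in>init A. (i, q) \<in> (edge_rel A)\<^sup>*)"

definition coaccessible :: "nat \<Rightarrow> 'a nfa \<Rightarrow> bool" where
  "coaccessible n A \<longleftrightarrow> (\<forall>q\<in>{1..n}. \<exists>f\<in>final A. (q, f) \<in> (edge_rel A)\<^sup>*)"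

definition trim :: "nat \<Rightarrow> 'a nfa \<Rightarrow> bool" where
  "trim n A \<longleftrightarrow> accessible n A \<and> coaccessible n A"

definition wf_nfa :: "nat \<Rightarrow> 'a nfa \<Rightarrow> bool" where
  "wf_nfa n A \<longleftrightarrow> trans A \<subseteq> {1..n} \<times> UNIV \<times> {1..n} \<and> init A \<subseteq> {1..n} \<and> final A \<subseteq> {1..n}"

definition NFA_class :: "nat \<Rightarrow> 'a nfa set" where
  "NFA_class n = {A. wf_nfa n A \<and> trim n A}"

definition NFA_class_m :: "nat \<Rightarrow> nat \<Rightarrow> 'a nfa set" where
  "NFA_class_m m n = {A \<in> NFA_class n. \<forall>p\<in>{1..n}. card {(a, q). (p, a, q) \<in> trans A} \<le> m}"

definition NFA_class_m' :: "nat \<Rightarrow> nat \<Rightarrow> 'a nfa set" where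
  "NFA_class_m' m n = {A \<in> NFA_class n. \<forall>p\<in>{1..n}. \<forall>a. card {q. (p, a, q) \<in> trans A} \<le> m}"

definition bullet :: "'a nfa set \<Rightarrow> 'a nfa set" where
  "bullet X = {A \<in> X. init A = {1}}"

definition toggle :: "'b \<Rightarrow> 'b set \<Rightarrow> 'b set" where
  "toggle x S = (if x \<in> S then S - {x} else insert x S)"

definition Ch_init :: "'a nfa \<Rightarrow> nat \<Rightarrow> 'a nfa" where
  "Ch_init A q = A\<lparr>init := toggle q (init A)\<rparr>"

definition Ch_final :: "'a nfa \<Rightarrow> nat \<Rightarrow> 'a nfa" where
  "Ch_final A q = A\<lparr>final := toggle q (final A)\<rparr>"

definition Ch_trans :: "'a nfa \<Rightarrow> nat \<times> 'a \<times> nat \<Rightarrow> 'a nfa" where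
  "Ch_trans A t = A\<lparr>trans := toggle t (trans A)\<rparr>"

definition S_off :: "nat \<Rightarrow> real \<Rightarrow> real \<Rightarrow> real \<Rightarrow> 'a::finite nfa \<Rightarrow> 'a nfa \<Rightarrow> real" where
  "S_off n \<rho>1 \<rho>2 \<rho>3 x y =
     (if \<exists>q\<in>{1..n}. y = Ch_init x q then \<rho>1 / real n
      else if \<exists>q\<in>{1..n}. y = Ch_final x q then \<rho>2 / real n
      else if \<exists>p\<in>{1..n}. \<exists>a. \<exists>q\<in>{1..n}. y = Ch_trans x (p, a, q)
        then \<rho>3 / (real (card (UNIV :: 'a set)) * real n ^ 2)
      else 0)"

definition S_matrix :: "'a::finite nfa set \<Rightarrow> nat \<Rightarrow> real \<Rightarrow> real \<Rightarrow> real \<Rightarrow> 'a nfa \<Rightarrow> 'a nfa \<Rightarrow> real" where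
  "S_matrix X n \<rho>1 \<rho>2 \<rho>3 x y =
     (if x \<noteq> y then S_off n \<rho>1 \<rho>2 \<rho>3 x y
      else 1 - (\<Sum>z\<in>X - {x}. S_off n \<rho>1 \<rho>2 \<rho>3 x z))"

definition S_bullet :: "'a::finite nfa set \<Rightarrow> nat \<Rightarrow> real \<Rightarrow> 'a nfa \<Rightarrow> 'a nfa \<Rightarrow> real" where
  "S_bullet X n \<rho> = S_matrix (bullet X) n 0 \<rho> (1 - \<rho>)"

definition irreducible_chain :: "'b set \<Rightarrow> ('b \<Rightarrow> 'b \<Rightarrow> real) \<Rightarrow> bool" where
  "irreducible_chain X P \<longleftrightarrow>
     (\<forall>x\<in>X. \<forall>y\<in>X. (x, y) \<in> {(u, v). u \<in> X \<and> v \<in> X \<and> P u v \<noteq> 0}\<^sup>*)"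

end

theory Submission
  imports Defs
begin

text \<open>Every positive entry of the transition matrices toggles one component, so the support graph
  is symmetric and it suffices to connect every automaton to a fixed hub. Adding initial or final
  states preserves trimness; once all states are initial and final, transitions can be removed one
  by one, which connects every automaton to the automaton without transitions. In the chains with
  initial set {1}, all states are first made final. Then transitions not needed for accessibility
  from 1 are removed while the line 1 -a-> 2 -a-> ... -a-> n is grown. If the next line transition
  k -a-> k+1 would violate the degree bound, state k has two outgoing transitions; in an automaton
  without removable transitions every state has at most one incoming transition and state 1 none,
  so some state l reachable without one of them, say k -> q, has no outgoing transition, and
  replacing k -> q by l -a-> q keeps accessibility while lowering the out-degree of k.\<close>

section \<open>Reachability\<close>

lemma rtrancl_reach_via_new_edge:
  assumes "(x, r) \<in> E\<^sup>*" and "E \<subseteq> insert (p, q) E'" and "(x, q) \<in> E'\<^sup>*"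
  shows "(x, r) \<in> E'\<^sup>*"
  using assms(1)
proof (induction rule: rtrancl_induct)
  case (step y z)
  show ?case
  proof (cases "(y, z) \<in> E'")
    case True
    with step.IH show ?thesis by (rule rtrancl_into_rtrancl)
  next
    case False
    with step.hyps(2) assms(2) have "z = q" by auto
    with assms(3) show ?thesis by simp
  qed
qed simp

lemma rtrancl_last_step_avoiding:
  assumes "(x, y) \<in> E\<^sup>*" and "x \<noteq> y"
  obtains z where "(x, z) \<in> {(u, w) \<in> E. w \<noteq> y}\<^sup>*" and "(z, y) \<in> E"
proof -
  let ?F = "{(u, w) \<in> E. w \<noteq> y}"
  have "(x, w) \<in> ?F\<^sup>* \<or> (\<exists>z. (x, z) \<in> ?F\<^sup>* \<and> (z, y) \<in> E)" if "(x, w) \<in> E\<^sup>*" for w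
    using that
  proof (induction rule: rtrancl_induct)
    case (step w w')
    then show ?case
      by (cases "w' = y") (auto intro: rtrancl_into_rtrancl)
  qed simp
  from this[OF assms(1)] show ?thesis
  proof
    assume "(x, y) \<in> ?F\<^sup>*"
    then show ?thesis
      using assms(2) by (cases rule: rtranclE) auto
  qed (use that in blast)
qed

lemma reachable_sink:
  assumes "finite (E\<^sup>* `` {x})"
    and no_edge_into_root: "\<And>u. (u, x) \<notin> E"
    and unique_predecessor: "\<And>u u' w. (u, w) \<in> E \<Longrightarrow> (u', w) \<in> E \<Longrightarrow> u = u'"
  obtains y where "(x, y) \<in> E\<^sup>*" "\<forall>w. (y, w) \<notin> E"
proof (rule ccontr)
  let ?V = "E\<^sup>* `` {x}"
  assume "\<not> thesis"
  with that have "\<forall>y\<in>?V. \<exists>w. (y, w) \<in> E"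
    by blast
  then obtain s where s: "\<forall>y\<in>?V. (y, s y) \<in> E"
    by metis
  have "s ` ?V \<subseteq> ?V - {x}"
    using s no_edge_into_root by (auto intro: rtrancl_into_rtrancl)
  moreover have "inj_on s ?V"
    using s unique_predecessor by (intro inj_onI) metis
  ultimately have "card ?V \<le> card (?V - {x})"
    using assms(1) by (intro card_inj_on_le) auto
  moreover have "card (?V - {x}) < card ?V"
    using assms(1) by (intro card_Diff1_less) auto
  ultimately show False
    by simp
qed

section \<open>Elementary changes of automata\<close>

lemma toggle_neq: "toggle x S \<noteq> S"
  by (auto simp: toggle_def)

lemma toggle_toggle [simp]: "toggle x (toggle x S) = S"
  by (auto simp: toggle_def)

lemma toggle_mem [simp]: "x \<in> S \<Longrightarrow> toggle x S = S - {x}"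
  and toggle_nonmem [simp]: "x \<notin> S \<Longrightarrow> toggle x S = insert x S"
  by (simp_all add: toggle_def)

lemma Ch_simps [simp]:
  "trans (Ch_init A q) = trans A" "init (Ch_init A q) = toggle q (init A)"
  "final (Ch_init A q) = final A"
  "trans (Ch_final A q) = trans A" "init (Ch_final A q) = init A"
  "final (Ch_final A q) = toggle q (final A)"
  "trans (Ch_trans A t) = toggle t (trans A)" "init (Ch_trans A t) = init A"
  "final (Ch_trans A t) = final A"
  by (simp_all add: Ch_init_def Ch_final_def Ch_trans_def)

lemma Ch_involutive [simp]:
  "Ch_init (Ch_init A q) q = A" "Ch_final (Ch_final A q) q = A" "Ch_trans (Ch_trans A t) t = A"
  by (simp_all add: Ch_init_def Ch_final_def Ch_trans_def)

lemma Ch_distinct: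
  "Ch_init A q \<noteq> A" "Ch_final A q \<noteq> A" "Ch_trans A t \<noteq> A"
  "Ch_final A q \<noteq> Ch_init A q'" "Ch_trans A t \<noteq> Ch_init A q'" "Ch_trans A t \<noteq> Ch_final A q'"
  by (metis Ch_simps toggle_neq)+

lemma nfa_eqI: "trans A = T \<Longrightarrow> init A = I \<Longrightarrow> final A = F \<Longrightarrow> A = \<lparr>trans = T, init = I, final = F\<rparr>"
  by (cases A) simp

lemma edge_rel_mono: "trans A \<subseteq> trans B \<Longrightarrow> edge_rel A \<subseteq> edge_rel B"
  unfolding edge_rel_def by auto

lemma wf_nfa_finite_trans: "wf_nfa n (A :: 'a::finite nfa) \<Longrightarrow> finite (trans A)"
  unfolding wf_nfa_def by (rule finite_subset[of _ "{1..n} \<times> UNIV \<times> {1..n}"]) auto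

lemma wf_nfa_Ch_trans:
  "wf_nfa n A \<Longrightarrow> p \<in> {1..n} \<Longrightarrow> q \<in> {1..n} \<Longrightarrow> wf_nfa n (Ch_trans A (p, a, q))"
  by (auto simp: wf_nfa_def toggle_def)

lemma trim_mono:
  assumes "trans A \<subseteq> trans B" "init A \<subseteq> init B" "final A \<subseteq> final B" "trim n A"
  shows "trim n B"
  using assms rtrancl_mono[OF edge_rel_mono[OF assms(1)]]
  unfolding trim_def accessible_def coaccessible_def by blast

lemma trim_if_all_init_final: "{1..n} \<subseteq> init A \<Longrightarrow> {1..n} \<subseteq> final A \<Longrightarrow> trim n A"
  unfolding trim_def accessible_def coaccessible_def by blast

text \<open>Initial states are toggled only if \<open>with_init\<close>: the chains with initial set {1} have
  \<open>\<rho>1 = 0\<close>.\<close>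

definition moves :: "bool \<Rightarrow> nat \<Rightarrow> 'a nfa set \<Rightarrow> ('a nfa \<times> 'a nfa) set" where
  "moves with_init n X = {(A, B). A \<in> X \<and> B \<in> X \<and>
     ((with_init \<and> (\<exists>q\<in>{1..n}. B = Ch_init A q)) \<or> (\<exists>q\<in>{1..n}. B = Ch_final A q) \<or>
      (\<exists>p\<in>{1..n}. \<exists>a. \<exists>q\<in>{1..n}. B = Ch_trans A (p, a, q)))}"

lemma moves_in_class: "(A, B) \<in> moves with_init n X \<Longrightarrow> A \<in> X \<and> B \<in> X"
  by (simp add: moves_def)

lemma moves_Ch_initI: "A \<in> X \<Longrightarrow> Ch_init A q \<in> X \<Longrightarrow> q \<in> {1..n} \<Longrightarrow> (A, Ch_init A q) \<in> moves True n X"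
  unfolding moves_def by blast

lemma moves_Ch_finalI:
  "A \<in> X \<Longrightarrow> Ch_final A q \<in> X \<Longrightarrow> q \<in> {1..n} \<Longrightarrow> (A, Ch_final A q) \<in> moves with_init n X"
  unfolding moves_def by blast

lemma moves_Ch_transI:
  "A \<in> X \<Longrightarrow> Ch_trans A (p, a, q) \<in> X \<Longrightarrow> p \<in> {1..n} \<Longrightarrow> q \<in> {1..n} \<Longrightarrow>
   (A, Ch_trans A (p, a, q)) \<in> moves with_init n X"
  unfolding moves_def by blast

lemma sym_moves: "sym (moves with_init n X)"
  by (rule symI) (auto simp: moves_def; metis Ch_involutive atLeastAtMost_iff)

lemma moves_subset_positive_entries:
  fixes X :: "'a::finite nfa set"
  assumes "with_init \<longrightarrow> \<rho>1 > 0" "\<rho>2 > 0" "\<rho>3 > 0" "n \<ge> 1"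
  shows "moves with_init n X \<subseteq> {(A, B). A \<in> X \<and> B \<in> X \<and> S_matrix X n \<rho>1 \<rho>2 \<rho>3 A B \<noteq> 0}"
proof -
  have "real (card (UNIV :: 'a set)) > 0"
    by (simp add: finite_UNIV_card_ge_0)
  then show ?thesis
    using assms unfolding moves_def S_matrix_def
    by (auto simp: S_off_def Ch_distinct Ch_distinct[symmetric])
qed

lemma irreducible_chainI:
  assumes "sym R" and "R \<subseteq> {(u, v). u \<in> X \<and> v \<in> X \<and> P u v \<noteq> 0}" and "\<forall>x\<in>X. (x, c) \<in> R\<^sup>*"
  shows "irreducible_chain X P"
  unfolding irreducible_chain_def
proof (intro ballI)
  fix x y assume "x \<in> X" "y \<in> X"
  then have "(x, c) \<in> R\<^sup>*" "(c, y) \<in> R\<^sup>*"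
    using assms(3) sym_rtrancl[OF assms(1)] by (auto dest: symD)
  then have "(x, y) \<in> R\<^sup>*" by (rule rtrancl_trans)
  then show "(x, y) \<in> {(u, v). u \<in> X \<and> v \<in> X \<and> P u v \<noteq> 0}\<^sup>*"
    using rtrancl_mono[OF assms(2)] by blast
qed

section \<open>Classes of trim automata with a transition constraint\<close>

definition NFA_subclass :: "nat \<Rightarrow> ((nat \<times> 'a \<times> nat) set \<Rightarrow> bool) \<Rightarrow> 'a nfa set" where
  "NFA_subclass n D = {A \<in> NFA_class n. D (trans A)}"

definition out_trans :: "(nat \<times> 'a \<times> nat) set \<Rightarrow> nat \<Rightarrow> ('a \<times> nat) set" where
  "out_trans T p = {(a, q). (p, a, q) \<in> T}"

definition bounded_out_degree :: "nat \<Rightarrow> nat \<Rightarrow> (nat \<times> 'a \<times> nat) set \<Rightarrow> bool" where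
  "bounded_out_degree m n T \<longleftrightarrow> (\<forall>p\<in>{1..n}. card (out_trans T p) \<le> m)"

definition bounded_letter_degree :: "nat \<Rightarrow> nat \<Rightarrow> (nat \<times> 'a \<times> nat) set \<Rightarrow> bool" where
  "bounded_letter_degree m n T \<longleftrightarrow> (\<forall>p\<in>{1..n}. \<forall>a. card {q. (p, a, q) \<in> T} \<le> m)"

lemma NFA_class_eq_NFA_subclass:
  "NFA_class n = NFA_subclass n (\<lambda>_. True)"
  "NFA_class_m m n = NFA_subclass n (bounded_out_degree m n)"
  "NFA_class_m' m n = NFA_subclass n (bounded_letter_degree m n)"
  by (auto simp: NFA_class_m_def NFA_class_m'_def NFA_subclass_def bounded_out_degree_def
      bounded_letter_degree_def out_trans_def)

lemma finite_out_trans: "finite T \<Longrightarrow> finite (out_trans T p)"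
  unfolding out_trans_def
  by (rule finite_subset[of _ "(\<lambda>(p, a, q). (a, q)) ` T"]) force+

lemma out_trans_mono: "T' \<subseteq> T \<Longrightarrow> out_trans T' p \<subseteq> out_trans T p"
  unfolding out_trans_def by auto

lemma out_trans_insert:
  "out_trans (insert (p, a, q) T) p' = (if p' = p then insert (a, q) (out_trans T p') else out_trans T p')"
  unfolding out_trans_def by auto

lemma finite_letter_succ: "finite T \<Longrightarrow> finite {q. (p, a, q) \<in> T}"
  by (rule finite_subset[of _ "(\<lambda>(p, a, q). q) ` T"]) force+

lemma card_letter_succ_le_card_out_trans:
  assumes "finite T"
  shows "card {q. (p, a, q) \<in> T} \<le> card (out_trans T p)"
proof -
  have "card {q. (p, a, q) \<in> T} = card (Pair a ` {q. (p, a, q) \<in> T})"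
    by (simp add: card_image inj_on_def)
  also have "\<dots> \<le> card (out_trans T p)"
    using assms by (intro card_mono finite_out_trans) (auto simp: out_trans_def)
  finally show ?thesis .
qed

lemma NFA_subclass_Ch_final_insert:
  assumes "A \<in> NFA_subclass n D" "q \<in> {1..n}" "q \<notin> final A"
  shows "Ch_final A q \<in> NFA_subclass n D"
proof -
  have "trim n (Ch_final A q)"
    by (rule trim_mono[of A]) (use assms in \<open>auto simp: NFA_subclass_def NFA_class_def\<close>)
  with assms show ?thesis
    by (auto simp: NFA_subclass_def NFA_class_def wf_nfa_def)
qed

lemma NFA_subclass_Ch_init_insert:
  assumes "A \<in> NFA_subclass n D" "q \<in> {1..n}" "q \<notin> init A"
  shows "Ch_init A q \<in> NFA_subclass n D"
proof -
  have "trim n (Ch_init A q)"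
    by (rule trim_mono[of A]) (use assms in \<open>auto simp: NFA_subclass_def NFA_class_def\<close>)
  with assms show ?thesis
    by (auto simp: NFA_subclass_def NFA_class_def wf_nfa_def)
qed

lemma bullet_Ch_final_insert:
  "A \<in> bullet (NFA_subclass n D) \<Longrightarrow> q \<in> {1..n} \<Longrightarrow> q \<notin> final A \<Longrightarrow>
   Ch_final A q \<in> bullet (NFA_subclass n D)"
  using NFA_subclass_Ch_final_insert by (auto simp: bullet_def)

lemma reach_all_final:
  assumes "A \<in> X"
    and closed: "\<And>A q. A \<in> X \<Longrightarrow> q \<in> {1..n} \<Longrightarrow> q \<notin> final A \<Longrightarrow> Ch_final A q \<in> X"
  shows "\<exists>B. (A, B) \<in> (moves with_init n X)\<^sup>* \<and> B \<in> X \<and> {1..n} \<subseteq> final B \<and>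
    trans B = trans A \<and> init B = init A"
  using assms(1)
proof (induction "card ({1..n} - final A)" arbitrary: A rule: less_induct)
  case less
  show ?case
  proof (cases "{1..n} \<subseteq> final A")
    case True
    then show ?thesis using less.prems by blast
  next
    case False
    then obtain q where q: "q \<in> {1..n}" "q \<notin> final A" by blast
    let ?A' = "Ch_final A q"
    have move: "(A, ?A') \<in> moves with_init n X"
      using closed less.prems q by (intro moves_Ch_finalI)
    have "{1..n} - final ?A' = ({1..n} - final A) - {q}"
      using q by auto
    then have "card ({1..n} - final ?A') < card ({1..n} - final A)"
      using q card_Diff1_less[of "{1..n} - final A" q] by simp
    then obtain B where "(?A', B) \<in> (moves with_init n X)\<^sup>*" "B \<in> X" "{1..n} \<subseteq> final B"
        "trans B = trans A" "init B = init A"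
      using less.hyps[of ?A'] moves_in_class[OF move] by auto
    then show ?thesis
      using converse_rtrancl_into_rtrancl[OF move] by blast
  qed
qed

section \<open>Automata without removable transitions\<close>

definition accessible_from_1 :: "nat \<Rightarrow> 'a nfa \<Rightarrow> bool" where
  "accessible_from_1 n A \<longleftrightarrow> (\<forall>q\<in>{1..n}. (1, q) \<in> (edge_rel A)\<^sup>*)"

definition line :: "'a \<Rightarrow> nat \<Rightarrow> (nat \<times> 'a \<times> nat) set" where
  "line a k = {(i, a, Suc i) | i. 1 \<le> i \<and> i < k}"

definition irredundant_outside :: "nat \<Rightarrow> (nat \<times> 'a \<times> nat) set \<Rightarrow> 'a nfa \<Rightarrow> bool" where
  "irredundant_outside n P A \<longleftrightarrow> (\<forall>t \<in> trans A - P. \<not> accessible_from_1 n (Ch_trans A t))"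

definition line_nfa :: "'a \<Rightarrow> nat \<Rightarrow> 'a nfa" where
  "line_nfa a n = \<lparr>trans = line a n, init = {1}, final = {1..n}\<rparr>"

lemma accessible_from_1_mono:
  assumes "accessible_from_1 n A" "trans A \<subseteq> trans B"
  shows "accessible_from_1 n B"
proof -
  have "(edge_rel A)\<^sup>* \<subseteq> (edge_rel B)\<^sup>*"
    using assms(2) by (intro rtrancl_mono edge_rel_mono)
  with assms(1) show ?thesis
    unfolding accessible_from_1_def by blast
qed

lemma accessible_from_1_Ch_trans_remove:
  assumes "accessible_from_1 n A" and "(1, q) \<in> (edge_rel (Ch_trans A (p, a, q)))\<^sup>*"
  shows "accessible_from_1 n (Ch_trans A (p, a, q))"
  unfolding accessible_from_1_def
proof
  fix r assume "r \<in> {1..n}"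
  with assms(1) have "(1, r) \<in> (edge_rel A)\<^sup>*"
    unfolding accessible_from_1_def by blast
  moreover have "edge_rel A \<subseteq> insert (p, q) (edge_rel (Ch_trans A (p, a, q)))"
    by (auto simp: edge_rel_def toggle_def)
  ultimately show "(1, r) \<in> (edge_rel (Ch_trans A (p, a, q)))\<^sup>*"
    using assms(2) by (rule rtrancl_reach_via_new_edge)
qed

lemma reach_along_line:
  assumes "line a k \<subseteq> trans A" "1 \<le> i" "i \<le> k"
  shows "(1, i) \<in> (edge_rel A)\<^sup>*"
  using assms(2,3)
proof (induction i)
  case (Suc j)
  show ?case
  proof (cases "j = 0")
    case False
    then have "(j, a, Suc j) \<in> trans A"
      using assms(1) Suc.prems unfolding line_def by auto
    then have "(j, Suc j) \<in> edge_rel A"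
      unfolding edge_rel_def by blast
    with Suc False show ?thesis by (simp add: rtrancl_into_rtrancl)
  qed simp
qed simp

lemma accessible_from_1_if_line:
  "line a n \<subseteq> trans A \<Longrightarrow> accessible_from_1 n A"
  unfolding accessible_from_1_def using reach_along_line[of a n A] by auto

lemma irredundant_full_line:
  assumes "irredundant_outside n (line a n) A" "line a n \<subseteq> trans A"
  shows "trans A = line a n"
proof (rule ccontr)
  assume "trans A \<noteq> line a n"
  then obtain t where t: "t \<in> trans A - line a n"
    using assms(2) by blast
  then have "line a n \<subseteq> trans (Ch_trans A t)"
    using assms(2) by (auto simp: toggle_def)
  then have "accessible_from_1 n (Ch_trans A t)"
    by (rule accessible_from_1_if_line)
  with assms(1) t show False
    unfolding irredundant_outside_def by blast
qed

lemma irredundant_trans_target_neq_1: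
  assumes "irredundant_outside n (line a k) A" "accessible_from_1 n A" "(l, c, r) \<in> trans A"
  shows "r \<noteq> 1"
proof
  assume r: "r = 1"
  have "(l, c, r) \<notin> line a k"
    using r by (simp add: line_def)
  moreover have "accessible_from_1 n (Ch_trans A (l, c, r))"
    using assms(2) by (rule accessible_from_1_Ch_trans_remove) (simp add: r)
  ultimately show False
    using assms(1,3) unfolding irredundant_outside_def by blast
qed

lemma irredundant_unique_in_trans:
  assumes wf: "wf_nfa n A" and acc: "accessible_from_1 n A" and k: "1 \<le> k"
    and line: "line a k \<subseteq> trans A" and irr: "irredundant_outside n (line a k) A"
    and t: "(l, c, r) \<in> trans A" and t': "(l', c', r) \<in> trans A"
  shows "(l, c) = (l', c')"
proof (rule ccontr)
  assume ne: "(l, c) \<noteq> (l', c')"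
  have r: "r \<in> {1..n}"
    using wf t unfolding wf_nfa_def by auto
  have necessary: "(1, r) \<notin> (edge_rel (Ch_trans A (x, y, r)))\<^sup>*"
    if "(x, y, r) \<in> trans A" "(x, y, r) \<notin> line a k" for x y
    using irr that accessible_from_1_Ch_trans_remove[OF acc] unfolding irredundant_outside_def by blast
  show False
  proof (cases "r \<le> k")
    case True
    have "(l, c, r) \<notin> line a k \<or> (l', c', r) \<notin> line a k"
      using ne unfolding line_def by auto
    then obtain x y where xy: "(x, y, r) \<in> trans A" "(x, y, r) \<notin> line a k"
      using t t' by blast
    then have "line a k \<subseteq> trans (Ch_trans A (x, y, r))"
      using line by (auto simp: toggle_def)
    then have "(1, r) \<in> (edge_rel (Ch_trans A (x, y, r)))\<^sup>*"
      by (rule reach_along_line) (use r True in auto)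
    with necessary xy show False by blast
  next
    case False
    have "(1, r) \<in> (edge_rel A)\<^sup>*"
      using acc r unfolding accessible_from_1_def by blast
    moreover have "1 \<noteq> r"
      using False k by simp
    ultimately obtain z where z: "(1, z) \<in> {(u, w) \<in> edge_rel A. w \<noteq> r}\<^sup>*" "(z, r) \<in> edge_rel A"
      by (rule rtrancl_last_step_avoiding)
    then obtain d where zd: "(z, d, r) \<in> trans A"
      unfolding edge_rel_def by blast
    obtain x y where xy: "(x, y, r) \<in> trans A" "(x, y) \<noteq> (z, d)"
      using t t' ne by (cases "(l, c) = (z, d)") auto
    let ?B = "Ch_trans A (x, y, r)"
    have "{(u, w) \<in> edge_rel A. w \<noteq> r} \<subseteq> edge_rel ?B"
      by (auto simp: edge_rel_def toggle_def)
    then have "(1, z) \<in> (edge_rel ?B)\<^sup>*"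
      using z(1) rtrancl_mono by blast
    moreover have "(z, r) \<in> edge_rel ?B"
      using zd xy(2) by (auto simp: edge_rel_def toggle_def)
    ultimately have "(1, r) \<in> (edge_rel ?B)\<^sup>*"
      by (rule rtrancl_into_rtrancl)
    moreover have "(x, y, r) \<notin> line a k"
      using False by (auto simp: line_def)
    ultimately show False
      using necessary xy(1) by blast
  qed
qed

lemma irredundant_reaches_sink:
  assumes wf: "wf_nfa n A" and acc: "accessible_from_1 n A" and k: "1 \<le> k"
    and line: "line a k \<subseteq> trans A" and irr: "irredundant_outside n (line a k) A"
    and t1: "(k, c1, q1) \<in> trans A" and t2: "(k, c2, q2) \<in> trans A" and ne: "(c1, q1) \<noteq> (c2, q2)"
  obtains l where "l \<in> {1..n}" "(1, l) \<in> (edge_rel (Ch_trans A (k, c1, q1)))\<^sup>*"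
    "out_trans (trans A) l = {}"
proof -
  let ?A' = "Ch_trans A (k, c1, q1)"
  have trans_A': "trans ?A' = trans A - {(k, c1, q1)}"
    using t1 by simp
  have wf_trans: "p \<in> {1..n} \<and> q \<in> {1..n}" if "(p, c, q) \<in> trans A" for p c q
    using wf that unfolding wf_nfa_def by blast
  have reachable_sub: "(edge_rel ?A')\<^sup>* `` {1} \<subseteq> {1..n}"
  proof
    fix r assume "r \<in> (edge_rel ?A')\<^sup>* `` {1}"
    then have "(1, r) \<in> (edge_rel ?A')\<^sup>*"
      by simp
    then show "r \<in> {1..n}"
    proof (cases rule: rtranclE)
      case base
      then show ?thesis using wf_trans[OF t1] by simp
    next
      case (step y)
      then show ?thesis using wf_trans trans_A' unfolding edge_rel_def by blast
    qed
  qed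
  obtain l where l: "(1, l) \<in> (edge_rel ?A')\<^sup>*" "\<forall>w. (l, w) \<notin> edge_rel ?A'"
  proof (rule reachable_sink)
    show "finite ((edge_rel ?A')\<^sup>* `` {1})"
      using reachable_sub by (rule finite_subset) simp
    show "(u, 1) \<notin> edge_rel ?A'" for u
      using irredundant_trans_target_neq_1[OF irr acc] trans_A' unfolding edge_rel_def by blast
    show "u = u'" if "(u, w) \<in> edge_rel ?A'" "(u', w) \<in> edge_rel ?A'" for u u' w
      using that irredundant_unique_in_trans[OF wf acc k line irr] trans_A'
      unfolding edge_rel_def by blast
  qed
  moreover have "out_trans (trans A) l = {}"
  proof (cases "l = k")
    case True
    then show ?thesis
      using l(2) t2 ne trans_A' unfolding edge_rel_def by auto
  next
    case False
    then show ?thesis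
      using l(2) trans_A' unfolding edge_rel_def out_trans_def by auto
  qed
  ultimately show ?thesis
    using that reachable_sub by blast
qed

lemma bullet_NFA_subclassI:
  assumes "wf_nfa n A" "init A = {1}" "final A = {1..n}" "accessible_from_1 n A" "D (trans A)"
  shows "A \<in> bullet (NFA_subclass n D)"
  using assms
  unfolding bullet_def NFA_subclass_def NFA_class_def trim_def accessible_def coaccessible_def
    accessible_from_1_def
  by blast

lemma accessible_from_1_if_bullet: "A \<in> bullet (NFA_subclass n D) \<Longrightarrow> accessible_from_1 n A"
  unfolding bullet_def NFA_subclass_def NFA_class_def trim_def accessible_def accessible_from_1_def
  by auto

section \<open>Irreducibility\<close>

definition edgeless_nfa :: "nat \<Rightarrow> 'a nfa" where
  "edgeless_nfa n = \<lparr>trans = {}, init = {1..n}, final = {1..n}\<rparr>"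

text \<open>The constraints of \<open>N(n)\<close>, \<open>N_m(n)\<close> and \<open>N'_m(n)\<close> satisfy these closure properties;
  \<open>constraint_insert\<close> is where \<open>m \<ge> 2\<close> is used.\<close>

locale degree_constraint =
  fixes n :: nat and D :: "(nat \<times> 'a::finite \<times> nat) set \<Rightarrow> bool"
  assumes n_pos: "1 \<le> n"
    and constraint_subset: "finite T \<Longrightarrow> D T \<Longrightarrow> T' \<subseteq> T \<Longrightarrow> D T'"
    and constraint_insert: "finite T \<Longrightarrow> D T \<Longrightarrow> card (out_trans T p) \<le> 1 \<Longrightarrow> D (insert (p, a, q) T)"
begin

lemma moves_Ch_trans_remove_all_init_final:
  assumes A: "A \<in> NFA_subclass n D" and "{1..n} \<subseteq> init A" "{1..n} \<subseteq> final A"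
    and t: "(p, b, q) \<in> trans A"
  shows "(A, Ch_trans A (p, b, q)) \<in> moves True n (NFA_subclass n D)"
proof -
  have wf: "wf_nfa n A" and D: "D (trans A)"
    using A by (auto simp: NFA_subclass_def NFA_class_def)
  have pq: "p \<in> {1..n}" "q \<in> {1..n}"
    using wf t unfolding wf_nfa_def by auto
  have "trim n (Ch_trans A (p, b, q))"
    using assms(2,3) by (intro trim_if_all_init_final) auto
  moreover have "D (trans (Ch_trans A (p, b, q)))"
    using constraint_subset[OF wf_nfa_finite_trans[OF wf] D] t by simp
  ultimately have "Ch_trans A (p, b, q) \<in> NFA_subclass n D"
    using wf_nfa_Ch_trans[OF wf pq] by (simp add: NFA_subclass_def NFA_class_def)
  with A pq show ?thesis
    by (intro moves_Ch_transI)
qed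

lemma reaches_edgeless_nfa:
  assumes "A \<in> NFA_subclass n D" "final A = {1..n}"
  shows "(A, edgeless_nfa n) \<in> (moves True n (NFA_subclass n D))\<^sup>*"
  using assms
proof (induction "card ({1..n} - init A) + card (trans A)" arbitrary: A rule: less_induct)
  case less
  have wf: "wf_nfa n A"
    using less.prems(1) by (simp add: NFA_subclass_def NFA_class_def)
  have fin: "finite (trans A)"
    using wf by (rule wf_nfa_finite_trans)
  show ?case
  proof (cases "{1..n} \<subseteq> init A")
    case False
    then obtain q where q: "q \<in> {1..n}" "q \<notin> init A" by blast
    let ?A' = "Ch_init A q"
    have move: "(A, ?A') \<in> moves True n (NFA_subclass n D)"
      using less.prems(1) q by (intro moves_Ch_initI NFA_subclass_Ch_init_insert)
    have "{1..n} - init ?A' = ({1..n} - init A) - {q}"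
      using q by auto
    then have "card ({1..n} - init ?A') < card ({1..n} - init A)"
      using q card_Diff1_less[of "{1..n} - init A" q] by simp
    then have "(?A', edgeless_nfa n) \<in> (moves True n (NFA_subclass n D))\<^sup>*"
      using less.hyps[of ?A'] moves_in_class[OF move] less.prems(2) by simp
    with move show ?thesis by (rule converse_rtrancl_into_rtrancl)
  next
    case all_init: True
    show ?thesis
    proof (cases "trans A = {}")
      case True
      have "init A = {1..n}"
        using all_init wf by (auto simp: wf_nfa_def)
      with True less.prems(2) have "A = edgeless_nfa n"
        unfolding edgeless_nfa_def by (intro nfa_eqI)
      then show ?thesis by simp
    next
      case False
      then obtain p b q where t: "(p, b, q) \<in> trans A" by auto
      let ?A' = "Ch_trans A (p, b, q)"
      have move: "(A, ?A') \<in> moves True n (NFA_subclass n D)"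
        using less.prems all_init t by (intro moves_Ch_trans_remove_all_init_final) auto
      have "card (trans ?A') < card (trans A)"
        using card_Diff1_less[OF fin t] t by simp
      then have "(?A', edgeless_nfa n) \<in> (moves True n (NFA_subclass n D))\<^sup>*"
        using less.hyps[of ?A'] moves_in_class[OF move] less.prems(2) by simp
      with move show ?thesis by (rule converse_rtrancl_into_rtrancl)
    qed
  qed
qed

lemma NFA_subclass_reaches_edgeless_nfa:
  "\<forall>A\<in>NFA_subclass n D. (A, edgeless_nfa n) \<in> (moves True n (NFA_subclass n D))\<^sup>*"
proof
  fix A assume "A \<in> NFA_subclass n D"
  then obtain B where B: "(A, B) \<in> (moves True n (NFA_subclass n D))\<^sup>*" "B \<in> NFA_subclass n D"
      "{1..n} \<subseteq> final B"
    using reach_all_final[OF _ NFA_subclass_Ch_final_insert] by blast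
  then have "final B = {1..n}"
    by (auto simp: NFA_subclass_def NFA_class_def wf_nfa_def)
  with B(2) have "(B, edgeless_nfa n) \<in> (moves True n (NFA_subclass n D))\<^sup>*"
    by (rule reaches_edgeless_nfa)
  with B(1) show "(A, edgeless_nfa n) \<in> (moves True n (NFA_subclass n D))\<^sup>*"
    by (rule rtrancl_trans)
qed

theorem irreducible_NFA_subclass:
  assumes "\<rho>1 > 0" "\<rho>2 > 0" "\<rho>3 > 0"
  shows "irreducible_chain (NFA_subclass n D) (S_matrix (NFA_subclass n D) n \<rho>1 \<rho>2 \<rho>3)"
  using assms n_pos
  by (intro irreducible_chainI[OF sym_moves moves_subset_positive_entries
        NFA_subclass_reaches_edgeless_nfa]) simp_all

abbreviation bullet_class :: "'a nfa set" where
  "bullet_class \<equiv> bullet (NFA_subclass n D)"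

abbreviation bullet_moves :: "('a nfa \<times> 'a nfa) set" where
  "bullet_moves \<equiv> moves False n bullet_class"

lemma bullet_class_D:
  assumes "A \<in> bullet_class"
  shows "wf_nfa n A" "init A = {1}" "D (trans A)" "finite (trans A)"
  using assms wf_nfa_finite_trans by (auto simp: bullet_def NFA_subclass_def NFA_class_def)

lemma bullet_moves_Ch_trans_remove:
  assumes A: "A \<in> bullet_class" "final A = {1..n}" and t: "(p, b, q) \<in> trans A"
    and acc: "accessible_from_1 n (Ch_trans A (p, b, q))"
  shows "(A, Ch_trans A (p, b, q)) \<in> bullet_moves"
proof -
  have pq: "p \<in> {1..n}" "q \<in> {1..n}"
    using bullet_class_D(1)[OF A(1)] t unfolding wf_nfa_def by auto
  have "D (trans (Ch_trans A (p, b, q)))"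
    using constraint_subset[OF bullet_class_D(4,3)[OF A(1)]] t by simp
  then have "Ch_trans A (p, b, q) \<in> bullet_class"
    using A acc wf_nfa_Ch_trans[OF bullet_class_D(1)[OF A(1)] pq] bullet_class_D(2)[OF A(1)]
    by (intro bullet_NFA_subclassI) simp_all
  with A(1) pq show ?thesis
    by (intro moves_Ch_transI)
qed

lemma bullet_moves_Ch_trans_insert:
  assumes A: "A \<in> bullet_class" "final A = {1..n}" and pq: "p \<in> {1..n}" "q \<in> {1..n}"
    and t: "(p, b, q) \<notin> trans A" and D: "D (insert (p, b, q) (trans A))"
  shows "(A, Ch_trans A (p, b, q)) \<in> bullet_moves"
proof -
  have "accessible_from_1 n (Ch_trans A (p, b, q))"
    by (rule accessible_from_1_mono[OF accessible_from_1_if_bullet[OF A(1)]]) (use t in auto)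
  then have "Ch_trans A (p, b, q) \<in> bullet_class"
    using A t D wf_nfa_Ch_trans[OF bullet_class_D(1)[OF A(1)] pq] bullet_class_D(2)[OF A(1)]
    by (intro bullet_NFA_subclassI) simp_all
  with A(1) pq show ?thesis
    by (intro moves_Ch_transI)
qed

text \<open>The transition \<open>(l, a, q1)\<close> is added before \<open>(k, c1, q1)\<close> is removed, so that both
  intermediate automata stay accessible from 1.\<close>

lemma rewire_to_sink:
  assumes A: "A \<in> bullet_class" "final A = {1..n}" and k: "1 \<le> k"
    and line: "line a k \<subseteq> trans A" and irr: "irredundant_outside n (line a k) A"
    and t1: "(k, c1, q1) \<in> trans A" and t2: "(k, c2, q2) \<in> trans A" and ne: "(c1, q1) \<noteq> (c2, q2)"
  obtains A' where "(A, A') \<in> bullet_moves\<^sup>*" "A' \<in> bullet_class" "final A' = {1..n}"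
    "line a k \<subseteq> trans A'" "card (trans A') = card (trans A)"
    "card (out_trans (trans A') k) < card (out_trans (trans A) k)"
proof -
  note wf = bullet_class_D(1)[OF A(1)] and D = bullet_class_D(3)[OF A(1)]
    and fin = bullet_class_D(4)[OF A(1)]
  have acc: "accessible_from_1 n A"
    using A(1) by (rule accessible_from_1_if_bullet)
  obtain l where l: "l \<in> {1..n}" "(1, l) \<in> (edge_rel (Ch_trans A (k, c1, q1)))\<^sup>*"
      "out_trans (trans A) l = {}"
    using irredundant_reaches_sink[OF wf acc k line irr t1 t2 ne] .
  have q1: "q1 \<in> {1..n}"
    using wf t1 unfolding wf_nfa_def by auto
  have "l \<noteq> k" and new: "(l, a, q1) \<notin> trans A"
    using l(3) t1 unfolding out_trans_def by auto
  let ?A1 = "Ch_trans A (l, a, q1)"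
  let ?A2 = "Ch_trans ?A1 (k, c1, q1)"
  have move1: "(A, ?A1) \<in> bullet_moves"
    using A l(1) q1 new constraint_insert[OF fin D] l(3) by (intro bullet_moves_Ch_trans_insert) auto
  have trans_A2: "trans ?A2 = insert (l, a, q1) (trans A - {(k, c1, q1)})"
    using new t1 \<open>l \<noteq> k\<close> by auto
  have "(1, q1) \<in> (edge_rel ?A2)\<^sup>*"
  proof -
    have "edge_rel (Ch_trans A (k, c1, q1)) \<subseteq> edge_rel ?A2"
      by (rule edge_rel_mono) (use trans_A2 t1 in auto)
    then have "(1, l) \<in> (edge_rel ?A2)\<^sup>*"
      using l(2) rtrancl_mono by blast
    moreover have "(l, q1) \<in> edge_rel ?A2"
      using trans_A2 unfolding edge_rel_def by blast
    ultimately show ?thesis by (rule rtrancl_into_rtrancl)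
  qed
  with accessible_from_1_if_bullet have "accessible_from_1 n ?A2"
    using moves_in_class[OF move1] by (blast intro: accessible_from_1_Ch_trans_remove)
  then have move2: "(?A1, ?A2) \<in> bullet_moves"
    using moves_in_class[OF move1] A(2) t1 new by (intro bullet_moves_Ch_trans_remove) auto
  have "(A, ?A2) \<in> bullet_moves\<^sup>*"
    using move1 move2 by (meson converse_rtrancl_into_rtrancl r_into_rtrancl)
  then show ?thesis
  proof (rule that)
    show "?A2 \<in> bullet_class" "final ?A2 = {1..n}"
      using moves_in_class[OF move2] A(2) by simp_all
    show "card (trans ?A2) = card (trans A)"
      using fin t1 new card_Diff1_less[OF fin t1] unfolding trans_A2 by simp
    have "out_trans (trans ?A2) k = out_trans (trans A) k - {(c1, q1)}"
      using trans_A2 \<open>l \<noteq> k\<close> unfolding out_trans_def by auto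
    then show "card (out_trans (trans ?A2) k) < card (out_trans (trans A) k)"
      using card_Diff1_less[of "out_trans (trans A) k" "(c1, q1)"] finite_out_trans[OF fin] t1
      unfolding out_trans_def by simp
    show "line a k \<subseteq> trans ?A2"
      using line trans_A2 unfolding line_def by auto
  qed
qed

lemma remove_redundant_trans:
  assumes A: "A \<in> bullet_class" "final A = {1..n}" and line: "line a k \<subseteq> trans A"
    and t: "t \<in> trans A - line a k" and acc: "accessible_from_1 n (Ch_trans A t)"
  obtains A' where "(A, A') \<in> bullet_moves" "A' \<in> bullet_class" "final A' = {1..n}"
    "line a k \<subseteq> trans A'" "card (trans A') < card (trans A)"
    "card (out_trans (trans A') k) \<le> card (out_trans (trans A) k)"
proof (rule that)
  obtain p b q where pbq: "t = (p, b, q)"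
    by (cases t)
  show move: "(A, Ch_trans A t) \<in> bullet_moves"
    using A t acc unfolding pbq by (intro bullet_moves_Ch_trans_remove) auto
  show "Ch_trans A t \<in> bullet_class" "final (Ch_trans A t) = {1..n}"
    using moves_in_class[OF move] A(2) by simp_all
  show "line a k \<subseteq> trans (Ch_trans A t)"
    using line t by auto
  show "card (trans (Ch_trans A t)) < card (trans A)"
    using card_Diff1_less[OF bullet_class_D(4)[OF A(1)], of t] t by simp
  show "card (out_trans (trans (Ch_trans A t)) k) \<le> card (out_trans (trans A) k)"
    using t finite_out_trans[OF bullet_class_D(4)[OF A(1)]]
    by (intro card_mono) (auto simp: out_trans_def)
qed

lemma extend_line:
  assumes A: "A \<in> bullet_class" "final A = {1..n}" and line: "line a k \<subseteq> trans A"
    and k: "1 \<le> k" "k < n" and D: "D (insert (k, a, Suc k) (trans A))"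
  obtains A' where "(A, A') \<in> bullet_moves\<^sup>*" "A' \<in> bullet_class" "final A' = {1..n}"
    "line a (Suc k) \<subseteq> trans A'"
proof (cases "(k, a, Suc k) \<in> trans A")
  case True
  then have "line a (Suc k) \<subseteq> trans A"
    using line by (auto simp: line_def less_Suc_eq)
  with A that show thesis
    by blast
next
  case False
  let ?A' = "Ch_trans A (k, a, Suc k)"
  have move: "(A, ?A') \<in> bullet_moves"
    using A False k D by (intro bullet_moves_Ch_trans_insert) auto
  show thesis
  proof (rule that)
    show "(A, ?A') \<in> bullet_moves\<^sup>*"
      using move by (rule r_into_rtrancl)
    show "?A' \<in> bullet_class" "final ?A' = {1..n}"
      using moves_in_class[OF move] A(2) by simp_all
    show "line a (Suc k) \<subseteq> trans ?A'"
      using line False by (auto simp: line_def less_Suc_eq)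
  qed
qed

lemma reach_line_nfa_from_prefix:
  assumes extend: "k < n \<Longrightarrow> (\<And>B. B \<in> bullet_class \<Longrightarrow> final B = {1..n} \<Longrightarrow>
      line a (Suc k) \<subseteq> trans B \<Longrightarrow> (B, line_nfa a n) \<in> bullet_moves\<^sup>*)"
    and k: "1 \<le> k" "k \<le> n"
    and "A \<in> bullet_class" "final A = {1..n}" "line a k \<subseteq> trans A"
  shows "(A, line_nfa a n) \<in> bullet_moves\<^sup>*"
  using assms(4-6)
proof (induction "card (trans A) + card (out_trans (trans A) k)" arbitrary: A rule: less_induct)
  case less
  note A = less.prems(1,2) and line = less.prems(3)
  note D = bullet_class_D(3)[OF A(1)] and fin = bullet_class_D(4)[OF A(1)]
  consider (redundant) t where "t \<in> trans A - line a k" "accessible_from_1 n (Ch_trans A t)"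
    | (complete) "irredundant_outside n (line a k) A" "k = n"
    | (extendable) "k < n" "D (insert (k, a, Suc k) (trans A))"
    | (branching) "irredundant_outside n (line a k) A" "\<not> D (insert (k, a, Suc k) (trans A))"
    using k unfolding irredundant_outside_def by fastforce
  then show ?case
  proof cases
    case redundant
    then obtain A' where "(A, A') \<in> bullet_moves" and "(A', line_nfa a n) \<in> bullet_moves\<^sup>*"
      using remove_redundant_trans[OF A line] less.hyps by (metis add_less_le_mono)
    then show ?thesis
      by (rule converse_rtrancl_into_rtrancl)
  next
    case complete
    then have "trans A = line a n"
      using line by (intro irredundant_full_line) simp_all
    then have "A = line_nfa a n"
      using bullet_class_D(2)[OF A(1)] A(2) unfolding line_nfa_def by (intro nfa_eqI)
    then show ?thesis by simp
  next
    case extendable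
    then obtain A' where "(A, A') \<in> bullet_moves\<^sup>*" "(A', line_nfa a n) \<in> bullet_moves\<^sup>*"
      using extend_line[OF A line k(1)] extend by metis
    then show ?thesis
      by (rule rtrancl_trans)
  next
    case branching
    then have "\<not> card (out_trans (trans A) k) \<le> 1"
      using constraint_insert[OF fin D] by blast
    then obtain c1 q1 c2 q2 where "(k, c1, q1) \<in> trans A" "(k, c2, q2) \<in> trans A"
        "(c1, q1) \<noteq> (c2, q2)"
      using card_le_Suc0_iff_eq[OF finite_out_trans[OF fin]] unfolding out_trans_def by auto
    then obtain A' where "(A, A') \<in> bullet_moves\<^sup>*" "(A', line_nfa a n) \<in> bullet_moves\<^sup>*"
      using rewire_to_sink[OF A k(1) line branching(1)] less.hyps by (metis nat_add_left_cancel_less)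
    then show ?thesis
      by (rule rtrancl_trans)
  qed
qed

lemma reach_line_nfa:
  assumes "A \<in> bullet_class" "final A = {1..n}" "1 \<le> k" "k \<le> n" "line a k \<subseteq> trans A"
  shows "(A, line_nfa a n) \<in> bullet_moves\<^sup>*"
  using assms
proof (induction "n - k" arbitrary: k A rule: less_induct)
  case less
  show ?case
  proof (rule reach_line_nfa_from_prefix)
    fix B assume "k < n" "B \<in> bullet_class" "final B = {1..n}" "line a (Suc k) \<subseteq> trans B"
    then show "(B, line_nfa a n) \<in> bullet_moves\<^sup>*"
      using less.hyps[of "Suc k" B] less.prems(3) by simp
  qed (use less.prems in auto)
qed

lemma bullet_class_reaches_line_nfa: "\<forall>A\<in>bullet_class. (A, line_nfa a n) \<in> bullet_moves\<^sup>*"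
proof
  fix A assume "A \<in> bullet_class"
  then obtain B where B: "(A, B) \<in> bullet_moves\<^sup>*" "B \<in> bullet_class" "{1..n} \<subseteq> final B"
    using reach_all_final[OF _ bullet_Ch_final_insert] by blast
  then have "final B = {1..n}"
    using bullet_class_D(1)[OF B(2)] by (auto simp: wf_nfa_def)
  with B(2) n_pos have "(B, line_nfa a n) \<in> bullet_moves\<^sup>*"
    by (intro reach_line_nfa[where k = 1]) (auto simp: line_def)
  with B(1) show "(A, line_nfa a n) \<in> bullet_moves\<^sup>*"
    by (rule rtrancl_trans)
qed

theorem irreducible_bullet_NFA_subclass:
  assumes "0 < \<rho>" "\<rho> < 1"
  shows "irreducible_chain bullet_class (S_bullet (NFA_subclass n D) n \<rho>)"
  unfolding S_bullet_def using assms n_pos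
  by (intro irreducible_chainI[OF sym_moves moves_subset_positive_entries
        bullet_class_reaches_line_nfa]) simp_all

end

lemma degree_constraint_unconstrained:
  "1 \<le> n \<Longrightarrow> degree_constraint n (\<lambda>_ :: (nat \<times> 'a::finite \<times> nat) set. True)"
  by unfold_locales

lemma degree_constraint_bounded_out_degree:
  assumes "1 \<le> n" "2 \<le> m"
  shows "degree_constraint n (bounded_out_degree m n :: (nat \<times> 'a::finite \<times> nat) set \<Rightarrow> bool)"
proof
  fix T T' :: "(nat \<times> 'a \<times> nat) set"
  assume "finite T" "bounded_out_degree m n T" "T' \<subseteq> T"
  then show "bounded_out_degree m n T'"
    unfolding bounded_out_degree_def
    by (meson card_mono finite_out_trans order_trans out_trans_mono)
next
  fix T :: "(nat \<times> 'a \<times> nat) set" and p a q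
  assume "finite T" "bounded_out_degree m n T" "card (out_trans T p) \<le> 1"
  then show "bounded_out_degree m n (insert (p, a, q) T)"
    using assms(2) unfolding bounded_out_degree_def out_trans_insert
    by (auto simp: card_insert_if finite_out_trans)
qed (use assms in simp)

lemma degree_constraint_bounded_letter_degree:
  assumes "1 \<le> n" "2 \<le> m"
  shows "degree_constraint n (bounded_letter_degree m n :: (nat \<times> 'a::finite \<times> nat) set \<Rightarrow> bool)"
proof
  fix T T' :: "(nat \<times> 'a \<times> nat) set"
  assume fin: "finite T" and bounded: "bounded_letter_degree m n T" and "T' \<subseteq> T"
  show "bounded_letter_degree m n T'"
    unfolding bounded_letter_degree_def
  proof (intro ballI allI)
    fix p b assume "p \<in> {1..n}"
    have "card {q. (p, b, q) \<in> T'} \<le> card {q. (p, b, q) \<in> T}"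
      using \<open>T' \<subseteq> T\<close> by (intro card_mono finite_letter_succ fin) auto
    also have "\<dots> \<le> m"
      using bounded \<open>p \<in> {1..n}\<close> unfolding bounded_letter_degree_def by blast
    finally show "card {q. (p, b, q) \<in> T'} \<le> m" .
  qed
next
  fix T :: "(nat \<times> 'a \<times> nat) set" and p a q
  assume fin: "finite T" and bounded: "bounded_letter_degree m n T" and out: "card (out_trans T p) \<le> 1"
  show "bounded_letter_degree m n (insert (p, a, q) T)"
    unfolding bounded_letter_degree_def
  proof (intro ballI allI)
    fix p' b assume "p' \<in> {1..n}"
    show "card {q'. (p', b, q') \<in> insert (p, a, q) T} \<le> m"
    proof (cases "(p', b) = (p, a)")
      case True
      have "card {q'. (p', b, q') \<in> insert (p, a, q) T} = card (insert q {q'. (p, a, q') \<in> T})"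
        using True by (auto intro: arg_cong[where f = card])
      also have "\<dots> \<le> Suc (card (out_trans T p))"
        using card_letter_succ_le_card_out_trans[OF fin, of p a] finite_letter_succ[OF fin]
        by (simp add: card_insert_if)
      finally show ?thesis
        using out assms(2) by simp
    next
      case False
      then have "{q'. (p', b, q') \<in> insert (p, a, q) T} = {q'. (p', b, q') \<in> T}"
        by auto
      with bounded \<open>p' \<in> {1..n}\<close> show ?thesis
        unfolding bounded_letter_degree_def by simp
    qed
  qed
qed (use assms in simp)

theorem lemma1:
  fixes m n :: nat and \<rho> \<rho>1 \<rho>2 \<rho>3 :: real
  assumes "card (UNIV :: ('a::finite) set) \<ge> 2"
    and "n \<ge> 1" and "m \<ge> 2"
    and "0 < \<rho>" and "\<rho> < 1"
    and "\<rho>1 > 0" and "\<rho>2 > 0" and "\<rho>3 > 0" and "\<rho>1 + \<rho>2 + \<rho>3 \<le> 1"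
  shows "irreducible_chain (NFA_class n :: 'a nfa set) (S_matrix (NFA_class n) n \<rho>1 \<rho>2 \<rho>3)
       \<and> irreducible_chain (NFA_class_m m n :: 'a nfa set) (S_matrix (NFA_class_m m n) n \<rho>1 \<rho>2 \<rho>3)
       \<and> irreducible_chain (NFA_class_m' m n :: 'a nfa set) (S_matrix (NFA_class_m' m n) n \<rho>1 \<rho>2 \<rho>3)
       \<and> irreducible_chain (bullet (NFA_class n :: 'a nfa set)) (S_bullet (NFA_class n) n \<rho>)
       \<and> irreducible_chain (bullet (NFA_class_m m n :: 'a nfa set)) (S_bullet (NFA_class_m m n) n \<rho>)
       \<and> irreducible_chain (bullet (NFA_class_m' m n :: 'a nfa set)) (S_bullet (NFA_class_m' m n) n \<rho>)"
proof -
  interpret unconstrained: degree_constraint n "\<lambda>_ :: (nat \<times> 'a \<times> nat) set. True"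
    using assms(2) by (rule degree_constraint_unconstrained)
  interpret out_degree: degree_constraint n "bounded_out_degree m n :: (nat \<times> 'a \<times> nat) set \<Rightarrow> bool"
    using assms(2,3) by (rule degree_constraint_bounded_out_degree)
  interpret letter_degree: degree_constraint n "bounded_letter_degree m n :: (nat \<times> 'a \<times> nat) set \<Rightarrow> bool"
    using assms(2,3) by (rule degree_constraint_bounded_letter_degree)
  show ?thesis
    unfolding NFA_class_eq_NFA_subclass
    by (intro conjI unconstrained.irreducible_NFA_subclass[OF assms(6-8)]
        out_degree.irreducible_NFA_subclass[OF assms(6-8)]
        letter_degree.irreducible_NFA_subclass[OF assms(6-8)]
        unconstrained.irreducible_bullet_NFA_subclass[OF assms(4,5)]
        out_degree.irreducible_bullet_NFA_subclass[OF assms(4,5)]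
        letter_degree.irreducible_bullet_NFA_subclass[OF assms(4,5)])
qed

end
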